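(* Let $\theta:\mathbb{A}\to\mathbb{A}^\lambda$ be a primitive substitution (satisfying the standing assumptions) with $c(\theta)=1$. Then $h(\theta)=1$.
   Context: Substitution of constant length $\lambda\ge2$: $\theta:\mathbb{A}\to\mathbb{A}^\lambda$, $\theta(a)=\theta(a)_0\cdots\theta(a)_{\lambda-1}$, extended by concatenation, $\theta^k$ its iterates; primitive: for some $k$, every $\theta^k(a)$ contains every letter. Standing assumptions: some $a_0$ has $\theta(a_0)_0=a_0$, $\theta$ injective on letters, the subshift $X_\theta$ infinite; $u$ is the fixed point $\theta(u)=u$ with $u[0]=a_0$. For $k\ge0$, $S_k=\{r\ge1:u[k+r]=u[k]\}$ and $g_k=\gcd S_k$; height $h(\theta)=\max\{m\ge1:\gcd(m,\lambda)=1,\ m\mid g_0\}$ (it also equals $\max\{m:\gcd(m,\lambda)=1, m\mid g_k\}$ for each $k$). Column number $c(\theta)=\min_{k\ge1,\,0\le j<\lambda^k}|\{\theta^k(a)_j:a\in\mathbb{A}\}|$. *)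

theory Defs
  imports Main
begin

definition const_length :: "('a \<Rightarrow> 'a list) \<Rightarrow> nat \<Rightarrow> bool" where
  "const_length \<theta> lam \<longleftrightarrow> (\<forall>a. length (\<theta> a) = lam)"

fun subst_pow :: "('a \<Rightarrow> 'a list) \<Rightarrow> nat \<Rightarrow> 'a \<Rightarrow> 'a list" where
  "subst_pow \<theta> 0 a = [a]"
| "subst_pow \<theta> (Suc k) a = concat (map \<theta> (subst_pow \<theta> k a))"

definition primitive :: "('a \<Rightarrow> 'a list) \<Rightarrow> bool" where
  "primitive \<theta> \<longleftrightarrow> (\<exists>k\<ge>1. \<forall>a b. b \<in> set (subst_pow \<theta> k a))"

definition subst_language :: "('a \<Rightarrow> 'a list) \<Rightarrow> 'a list set" where
  "subst_language \<theta> = {w. \<exists>k a p q. subst_pow \<theta> k a = p @ w @ q}"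

definition subshift :: "('a \<Rightarrow> 'a list) \<Rightarrow> (int \<Rightarrow> 'a) set" where
  "subshift \<theta> = {x. \<forall>i::int. \<forall>n::nat. map (\<lambda>m. x (i + int m)) [0..<n] \<in> subst_language \<theta>}"

text \<open>The one-sided fixed point u = theta(u) with u[0] = a0: u[n] is the n-th letter of
  theta^(n+1)(a0) (which has length lam^(n+1) > n, and theta^k(a0) is a prefix of
  theta^(k+1)(a0) when theta(a0)_0 = a0).\<close>
definition fixpt :: "('a \<Rightarrow> 'a list) \<Rightarrow> 'a \<Rightarrow> nat \<Rightarrow> 'a" where
  "fixpt \<theta> a0 n = subst_pow \<theta> (Suc n) a0 ! n"

definition height :: "('a \<Rightarrow> 'a list) \<Rightarrow> nat \<Rightarrow> 'a \<Rightarrow> nat" where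
  "height \<theta> lam a0 =
     (let u = fixpt \<theta> a0; g0 = Gcd {r. r \<ge> 1 \<and> u r = u 0}
      in GREATEST m. m \<ge> 1 \<and> coprime m lam \<and> m dvd g0)"

definition column_number :: "('a \<Rightarrow> 'a list) \<Rightarrow> nat \<Rightarrow> nat" where
  "column_number \<theta> lam =
     Min {card ((\<lambda>a. subst_pow \<theta> k a ! j) ` UNIV) | k j. k \<ge> 1 \<and> j < lam ^ k}"

end

theory Submission
  imports Defs "HOL-Library.Sublist"
begin

text \<open>A column j of \<theta>^k in which only the letter b occurs forces u[\<lambda>^k m + j] = b for
  every m, since u = \<theta>^k(u). By primitivity a0 occurs in \<theta>^K(b), say at position i, so
  u[0] = a0 recurs at all positions \<lambda>^K (\<lambda>^k m + j) + i. Consecutive such return times differ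
  by \<lambda>^(K+k), hence g0 divides a power of \<lambda> and has no divisor > 1 coprime to \<lambda>.\<close>

lemma length_concat_map_const_length:
  assumes "const_length \<theta> lam"
  shows "length (concat (map \<theta> w)) = lam * length w"
  using assms by (induction w) (auto simp: const_length_def)

lemma length_subst_pow:
  assumes "const_length \<theta> lam"
  shows "length (subst_pow \<theta> k a) = lam ^ k"
  by (induction k arbitrary: a) (simp_all add: length_concat_map_const_length[OF assms])

lemma subst_pow_add:
  "subst_pow \<theta> (k + l) a = concat (map (subst_pow \<theta> l) (subst_pow \<theta> k a))"
proof (induction l)
  case 0
  show ?case by (simp add: concat_map_singleton[where f = id, simplified])
next
  case (Suc l)
  have "concat (map \<theta> (concat (map f w))) = concat (map (\<lambda>x. concat (map \<theta> (f x))) w)"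
    for f :: "'a \<Rightarrow> 'a list" and w by (induction w) auto
  then show ?case using Suc by simp
qed

lemma nth_concat_map_const_length:
  assumes "\<And>x. length (f x) = L" "i < L" "n < length w"
  shows "concat (map f w) ! (L * n + i) = f (w ! n) ! i"
  using assms(3)
proof (induction w arbitrary: n)
  case Nil then show ?case by simp
next
  case (Cons x w)
  then show ?case
    using assms(1,2) by (cases n) (simp_all add: nth_append add.assoc)
qed

text \<open>Since a0 is the first letter of \<theta>(a0), the words \<theta>^k(a0) form a chain of prefixes;
  this is what makes the fixed point u well defined.\<close>

lemma prefix_subst_pow_Suc:
  assumes "\<theta> a0 = a0 # rest"
  shows "prefix (subst_pow \<theta> k a0) (subst_pow \<theta> (Suc k) a0)"
proof -
  have "subst_pow \<theta> (1 + k) a0 = concat (map (subst_pow \<theta> k) (subst_pow \<theta> 1 a0))"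
    by (rule subst_pow_add)
  then have "subst_pow \<theta> (Suc k) a0 = subst_pow \<theta> k a0 @ concat (map (subst_pow \<theta> k) rest)"
    using assms by simp
  then show ?thesis by simp
qed

lemma prefix_subst_pow:
  assumes "\<theta> a0 = a0 # rest" "k \<le> m"
  shows "prefix (subst_pow \<theta> k a0) (subst_pow \<theta> m a0)"
  using assms(2)
proof (induction m rule: dec_induct)
  case (step m)
  then show ?case using prefix_subst_pow_Suc[of \<theta> a0 rest] assms(1) prefix_order.trans by blast
qed simp

lemma nth_prefix:
  assumes "prefix xs ys" "n < length xs"
  shows "xs ! n = ys ! n"
  using assms by (auto simp: nth_append elim!: prefixE)

lemma less_power_Suc:
  fixes lam :: nat
  assumes "lam \<ge> 2"
  shows "n < lam ^ Suc n"
proof -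
  have "n < 2 ^ n" by (rule less_exp)
  also have "\<dots> \<le> lam ^ n" using assms by (simp add: power_mono)
  also have "\<dots> < lam ^ Suc n" using assms by simp
  finally show ?thesis .
qed

lemma fixpt_eq_nth_subst_pow:
  assumes "lam \<ge> 2" "const_length \<theta> lam" "\<theta> a0 ! 0 = a0" "n < lam ^ m"
  shows "fixpt \<theta> a0 n = subst_pow \<theta> m a0 ! n"
proof -
  have "length (\<theta> a0) \<ge> 2" using assms(1,2) by (simp add: const_length_def)
  then have "\<theta> a0 \<noteq> []" by auto
  then have rest: "\<theta> a0 = a0 # tl (\<theta> a0)"
    using assms(3) by (metis hd_Cons_tl hd_conv_nth)
  have "n < lam ^ Suc n" using assms(1) by (rule less_power_Suc)
  then have short: "n < length (subst_pow \<theta> (min (Suc n) m) a0)"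
    using assms(4) by (simp add: length_subst_pow[OF assms(2)] min_def)
  have "subst_pow \<theta> (Suc n) a0 ! n = subst_pow \<theta> (min (Suc n) m) a0 ! n"
    using short by (intro nth_prefix[symmetric] prefix_subst_pow[of \<theta> a0, OF rest]) simp_all
  also have "\<dots> = subst_pow \<theta> m a0 ! n"
    using short by (intro nth_prefix prefix_subst_pow[of \<theta> a0, OF rest]) simp_all
  finally show ?thesis unfolding fixpt_def .
qed

lemma fixpt_block:
  assumes "lam \<ge> 2" "const_length \<theta> lam" "\<theta> a0 ! 0 = a0" "i < lam ^ K"
  shows "fixpt \<theta> a0 (lam ^ K * n + i) = subst_pow \<theta> K (fixpt \<theta> a0 n) ! i"
proof -
  have n: "n < lam ^ Suc n" using assms(1) by (rule less_power_Suc)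
  have "lam ^ K * n + i < lam ^ K * Suc n" using assms(4) by simp
  also have "\<dots> \<le> lam ^ K * lam ^ Suc n" using n by (intro mult_le_mono2) simp
  finally have "lam ^ K * n + i < lam ^ (Suc n + K)" by (simp add: power_add ac_simps)
  then have "fixpt \<theta> a0 (lam ^ K * n + i) = subst_pow \<theta> (Suc n + K) a0 ! (lam ^ K * n + i)"
    by (rule fixpt_eq_nth_subst_pow[OF assms(1-3)])
  also have "\<dots> = concat (map (subst_pow \<theta> K) (subst_pow \<theta> (Suc n) a0)) ! (lam ^ K * n + i)"
    by (subst subst_pow_add) (rule refl)
  also have "\<dots> = subst_pow \<theta> K (subst_pow \<theta> (Suc n) a0 ! n) ! i"
    using assms(4) n by (intro nth_concat_map_const_length)
      (simp_all add: length_subst_pow[OF assms(2)] del: subst_pow.simps)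
  finally show ?thesis by (simp add: fixpt_def)
qed

lemma column_number_attained:
  fixes \<theta> :: "'a::finite \<Rightarrow> 'a list"
  assumes "lam \<ge> 1"
  obtains k j where "k \<ge> 1" "j < lam ^ k"
    "card ((\<lambda>a. subst_pow \<theta> k a ! j) ` UNIV) = column_number \<theta> lam"
proof -
  let ?S = "{card ((\<lambda>a. subst_pow \<theta> k a ! j) ` UNIV) | k j. k \<ge> 1 \<and> j < lam ^ k}"
  have "?S \<subseteq> {..card (UNIV :: 'a set)}" by (auto intro: card_mono)
  then have "finite ?S" by (rule finite_subset) simp
  moreover have "card ((\<lambda>a. subst_pow \<theta> 1 a ! 0) ` UNIV) \<in> ?S"
    using assms by (intro CollectI exI[of _ 1] exI[of _ 0]) simp
  then have "?S \<noteq> {}" by blast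
  ultimately have "column_number \<theta> lam \<in> ?S"
    unfolding column_number_def by (rule Min_in)
  then show ?thesis using that by auto
qed

lemma Gcd_dvd_diff:
  fixes A :: "nat set"
  assumes "p \<in> A" "p + d \<in> A"
  shows "Gcd A dvd d"
  using dvd_diff_nat[OF Gcd_dvd[OF assms(2)] Gcd_dvd[OF assms(1)]] by simp

lemma height_eq_1_if_Gcd_dvd_power:
  assumes "Gcd {r. r \<ge> 1 \<and> fixpt \<theta> a0 r = fixpt \<theta> a0 0} dvd lam ^ e"
  shows "height \<theta> lam a0 = 1"
proof -
  have "m = 1" if "coprime m lam" "m dvd Gcd {r. r \<ge> 1 \<and> fixpt \<theta> a0 r = fixpt \<theta> a0 0}" for m
  proof -
    have "m dvd lam ^ e" using that(2) assms by (rule dvd_trans)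
    moreover have "coprime m (lam ^ e)" using that(1) by simp
    ultimately show ?thesis using coprime_common_divisor[of m "lam ^ e" m] by simp
  qed
  then show ?thesis
    unfolding height_def Let_def by (intro Greatest_equality) auto
qed

theorem mainTheorem5:
  fixes \<theta> :: "'a::finite \<Rightarrow> 'a list" and lam :: nat and a0 :: 'a
  assumes "lam \<ge> 2"
    and "const_length \<theta> lam"
    and "primitive \<theta>"
    and "\<theta> a0 ! 0 = a0"
    and "inj \<theta>"
    and "infinite (subshift \<theta>)"
    and "column_number \<theta> lam = 1"
  shows "height \<theta> lam a0 = 1"
proof -
  let ?u = "fixpt \<theta> a0"
  obtain k j where kj: "k \<ge> 1" "j < lam ^ k" "card ((\<lambda>a. subst_pow \<theta> k a ! j) ` UNIV) = 1"
    using column_number_attained[of lam \<theta>] assms(1,7) by auto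
  from kj(3) obtain b where "(\<lambda>a. subst_pow \<theta> k a ! j) ` UNIV = {b}"
    by (rule card_1_singletonE)
  then have column: "subst_pow \<theta> k a ! j = b" for a by blast
  obtain K where "\<forall>a b. b \<in> set (subst_pow \<theta> K a)"
    using assms(3) unfolding primitive_def by blast
  then obtain i where i: "i < lam ^ K" "subst_pow \<theta> K b ! i = a0"
    by (auto simp: in_set_conv_nth length_subst_pow[OF assms(2)])
  define r where "r m = lam ^ K * (lam ^ k * m + j) + i" for m
  have "?u 0 = a0" using assms(4) by (simp add: fixpt_def)
  then have "?u (r m) = ?u 0" for m
    using column i kj(2) by (simp add: r_def fixpt_block[OF assms(1,2,4)])
  moreover have "r 1 \<ge> 1"
    using assms(1) by (simp add: r_def Suc_le_eq)
  moreover have "r 1 + lam ^ (K + k) = r 2"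
    by (simp add: r_def algebra_simps power_add)
  ultimately have "Gcd {r. r \<ge> 1 \<and> ?u r = ?u 0} dvd lam ^ (K + k)"
    by (intro Gcd_dvd_diff[of "r 1"]) auto
  then show ?thesis by (rule height_eq_1_if_Gcd_dvd_power)
qed

end
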